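(* Let $w$ be an infinite word and let $n_0<n_1<n_2$ be three consecutive lengths of palindromic prefixes of $w$ (no palindromic prefix of $w$ has length strictly between $n_0$ and $n_1$ or between $n_1$ and $n_2$), with corresponding prefixes $\pi_0,\pi_1,\pi_2$. Write $\pi_1=\pi_0b$. Then either $\pi_2=\pi_1b$ (i.e. $\pi_2=\pi_1\pi_0^{-1}\pi_1$), or $n_2>n_0+n_1$.
   Context: Infinite words are right-infinite; a finite word is a palindrome if it equals its reversal, the empty word being a palindrome. *)

theory Defs
  imports Main
begin

definition pref :: "(nat \<Rightarrow> 'a) \<Rightarrow> nat \<Rightarrow> 'a list" where
  "pref w n = map w [0..<n]"

definition palindrome :: "'a list \<Rightarrow> bool" where
  "palindrome xs \<longleftrightarrow> rev xs = xs"

end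

theory Submission
  imports Defs
begin

text \<open>If \<open>n2 \<le> n0 + n1\<close>, the palindromes \<open>\<pi>1\<close> and \<open>\<pi>2\<close> give \<open>\<pi>2\<close> the period \<open>p = n2 - n1 \<le> n0\<close>.
  Extending the palindrome \<open>\<pi>0\<close> by one period yields a palindromic prefix of length \<open>n0 + p\<close>,
  strictly between \<open>n0\<close> and \<open>n2\<close>; by consecutiveness it is \<open>\<pi>1\<close>. Hence \<open>n2 = n1 + (n1 - n0)\<close>,
  and periodicity forces \<open>\<pi>2 = \<pi>1 b\<close>.\<close>

definition pref_period :: "(nat \<Rightarrow> 'a) \<Rightarrow> nat \<Rightarrow> nat \<Rightarrow> bool" where
  "pref_period w p n \<longleftrightarrow> (\<forall>i. p \<le> i \<longrightarrow> i < n \<longrightarrow> w i = w (i - p))"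

lemma pref_period_mono: "pref_period w p n \<Longrightarrow> m \<le> n \<Longrightarrow> pref_period w p m"
  unfolding pref_period_def by simp

lemma palindrome_pref_iff: "palindrome (pref w n) \<longleftrightarrow> (\<forall>i<n. w i = w (n - Suc i))"
proof -
  have "palindrome (pref w n) \<longleftrightarrow> (\<forall>i<n. rev (map w [0..<n]) ! i = map w [0..<n] ! i)"
    unfolding palindrome_def pref_def by (simp add: list_eq_iff_nth_eq)
  also have "\<dots> \<longleftrightarrow> (\<forall>i<n. w (n - Suc i) = w i)"
    by (intro all_cong1 imp_cong refl) (simp add: rev_nth)
  finally show ?thesis by (simp add: eq_commute)
qed

text \<open>Reflect through the centre of \<open>pref w n\<close>, then through that of \<open>pref w m\<close>.\<close>

lemma palindrome_prefixes_period:
  assumes "m \<le> n" "palindrome (pref w m)" "palindrome (pref w n)"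
  shows "pref_period w (n - m) n"
  unfolding pref_period_def
proof (intro allI impI)
  fix i assume i: "n - m \<le> i" "i < n"
  have "w i = w (n - Suc i)"
    using assms(3) i(2) unfolding palindrome_pref_iff by blast
  also have "\<dots> = w (m - Suc (n - Suc i))"
  proof -
    have "n - Suc i < m" using i by linarith
    then show ?thesis using assms(2) unfolding palindrome_pref_iff by blast
  qed
  also have "m - Suc (n - Suc i) = i - (n - m)"
    using assms(1) i by linarith
  finally show "w i = w (i - (n - m))" .
qed

lemma palindrome_pref_add_period:
  assumes "p \<le> q" "palindrome (pref w q)" "pref_period w p (q + p)"
  shows "palindrome (pref w (q + p))"
  unfolding palindrome_pref_iff
proof (intro allI impI)
  have pal: "\<And>i. i < q \<Longrightarrow> w i = w (q - Suc i)"
    using assms(2) unfolding palindrome_pref_iff by blast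
  have per: "\<And>i. p \<le> i \<Longrightarrow> i < q + p \<Longrightarrow> w i = w (i - p)"
    using assms(3) unfolding pref_period_def by blast
  fix i assume i: "i < q + p"
  show "w i = w (q + p - Suc i)"
  proof (cases "p \<le> i")
    case True
    have "w i = w (i - p)" by (rule per) (use True i in linarith)+
    also have "\<dots> = w (q - Suc (i - p))" by (rule pal) (use True i in linarith)
    also have "q - Suc (i - p) = q + p - Suc i" using True by simp
    finally show ?thesis .
  next
    case False
    have "w (q + p - Suc i) = w (q + p - Suc i - p)"
      by (rule per) (use False assms(1) in linarith)+
    also have "q + p - Suc i - p = q - Suc i" by simp
    also have "w (q - Suc i) = w i" by (rule pal[symmetric]) (use False assms(1) in linarith)
    finally show ?thesis by simp
  qed
qed

lemma pref_add_period:
  assumes "p \<le> n" "pref_period w p (n + p)"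
  shows "pref w (n + p) = pref w n @ drop (n - p) (pref w n)"
proof (rule nth_equalityI)
  show "length (pref w (n + p)) = length (pref w n @ drop (n - p) (pref w n))"
    using assms(1) by (simp add: pref_def)
next
  fix i assume "i < length (pref w (n + p))"
  then have i: "i < n + p" by (simp add: pref_def)
  show "pref w (n + p) ! i = (pref w n @ drop (n - p) (pref w n)) ! i"
  proof (cases "i < n")
    case False
    have "(pref w n @ drop (n - p) (pref w n)) ! i = w (n - p + (i - n))"
      using False i assms(1) by (simp add: pref_def nth_append)
    also have "n - p + (i - n) = i - p"
      using False assms(1) by linarith
    also have "w (i - p) = w i"
      using assms(2) False i assms(1) unfolding pref_period_def by (metis le_trans not_less)
    also have "\<dots> = pref w (n + p) ! i"
      using i by (simp add: pref_def)
    finally show ?thesis by simp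
  qed (use i in \<open>simp add: pref_def nth_append\<close>)
qed

theorem lemma5p5:
  fixes w :: "nat \<Rightarrow> 'a" and n0 n1 n2 :: nat
  assumes "n0 < n1" and "n1 < n2"
    and "palindrome (pref w n0)" and "palindrome (pref w n1)" and "palindrome (pref w n2)"
    and "\<And>m. n0 < m \<Longrightarrow> m < n1 \<Longrightarrow> \<not> palindrome (pref w m)"
    and "\<And>m. n1 < m \<Longrightarrow> m < n2 \<Longrightarrow> \<not> palindrome (pref w m)"
  shows "(let b = drop n0 (pref w n1) in pref w n2 = pref w n1 @ b) \<or> n2 > n0 + n1"
proof (cases "n2 > n0 + n1")
  case False
  define p where "p = n2 - n1"
  have n2_eq: "n2 = n1 + p" and "p \<le> n0"
    using False assms(2) unfolding p_def by linarith+
  have period: "pref_period w p n2"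
    unfolding p_def by (rule palindrome_prefixes_period) (use assms(2,4,5) in simp_all)
  have "palindrome (pref w (n0 + p))"
  proof (rule palindrome_pref_add_period)
    show "pref_period w p (n0 + p)"
      by (rule pref_period_mono[OF period]) (use assms(1) n2_eq in linarith)
  qed fact+
  moreover have "n0 < n0 + p" "n0 + p < n2"
    using assms(1,2) n2_eq by linarith+
  ultimately have n1_eq: "n1 = n0 + p"
    using assms(6,7) by (meson linorder_neqE_nat)
  have "pref w (n1 + p) = pref w n1 @ drop (n1 - p) (pref w n1)"
    by (rule pref_add_period) (use n1_eq period n2_eq in simp_all)
  then show ?thesis by (simp add: Let_def n1_eq n2_eq)
qed simp

end
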